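(* Let $\alpha(x)$ and $\beta(x)$ be real rational functions each of the form \[x-\tau_0-\sum_{m=1}^{M}\frac{\lambda_m}{x-\tau_m}\] with finitely many terms, real numbers $\tau_m$, and real $\lambda_m>0$ (depending on the function). Assume that at least one of $\alpha,\beta$ has at least one pole. Let $\lambda>0$ and $\theta\in\mathbb{R}$. If $\beta(\theta)=0$ and $\theta$ is not a pole of $\alpha$, then there exists $\theta'\in(\theta-\sqrt{\lambda},\theta+\sqrt{\lambda})$ such that $\beta(\theta')$ is neither $0$ nor a pole, and $\alpha(\theta')-\frac{\lambda}{\beta(\theta')}=0$. *)

theory Defs
  imports Complex_Main
begin

definition rf :: "real \<Rightarrow> (real \<times> real) list \<Rightarrow> real \<Rightarrow> real" where
  "rf t0 ps x = x - t0 - (\<Sum>(l, t)\<leftarrow>ps. l / (x - t))"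

definition admissible :: "(real \<times> real) list \<Rightarrow> bool" where
  "admissible ps \<longleftrightarrow> (\<forall>(l, t) \<in> set ps. l > 0)"

text \<open>Poles of rf t0 ps (the points t_m; since all l_m > 0 these are genuine poles).\<close>
definition poles :: "(real \<times> real) list \<Rightarrow> real set" where
  "poles ps = snd ` set ps"

end

theory Submission
  imports Defs "HOL-Real_Asymp.Real_Asymp"
begin

text \<open>Replacing \<open>x\<close> by \<open>-x\<close> (and every \<open>\<tau>\<^sub>m\<close> by \<open>-\<tau>\<^sub>m\<close>) we may assume \<open>\<alpha>(\<theta>) \<ge> 0\<close> and look
  to the right of \<open>\<theta>\<close>. Every summand \<open>-\<lambda>\<^sub>m/(x - \<tau>\<^sub>m)\<close> is increasing between poles, so
  as long as \<open>[\<theta>, x]\<close> contains no pole, \<open>\<alpha>(x) \<ge> x - \<theta>\<close> and \<open>\<beta>(x) \<ge> x - \<theta>\<close>. Hence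
  \<open>\<alpha>\<beta>\<close> vanishes at \<open>\<theta>\<close> and exceeds \<open>\<lambda>\<close> before \<open>\<theta> + \<surd>\<lambda>\<close>: either at \<open>\<theta> + \<surd>\<lambda>\<close>
  itself, where the pole that exists somewhere makes one of the two bounds strict, or
  just left of the first pole \<open>p \<le> \<theta> + \<surd>\<lambda>\<close>, where one factor tends to \<open>+\<infinity>\<close> while the
  other stays above \<open>x - \<theta>\<close>. The intermediate value theorem gives \<open>\<alpha>\<beta> = \<lambda>\<close> at a point
  where \<open>\<beta> > 0\<close>.\<close>

lemma member_le_sum_list_nonneg:
  fixes f :: "'a \<Rightarrow> 'b::ordered_comm_monoid_add"
  assumes "\<And>z. z \<in> set xs \<Longrightarrow> 0 \<le> f z" "x \<in> set xs"
  shows "f x \<le> (\<Sum>z\<leftarrow>xs. f z)"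
  using assms
proof (induction xs)
  case (Cons z xs)
  have "0 \<le> (\<Sum>z\<leftarrow>xs. f z)" using Cons.prems(1) by (intro sum_list_nonneg) auto
  then show ?case using Cons by (auto intro: add_increasing add_increasing2)
qed simp

lemma pole_term_less:
  fixes l t x y :: real
  assumes "l > 0" "x < y" "t \<notin> {x..y}"
  shows "l / (y - t) < l / (x - t)"
proof (cases "t < x")
  case True
  then show ?thesis using assms by (intro divide_strict_left_mono) auto
next
  case False
  then have "l / (t - x) < l / (t - y)" using assms by (intro divide_strict_left_mono) auto
  then show ?thesis by (metis minus_diff_eq divide_minus_right neg_less_iff_less)
qed

lemma rf_increment:
  "rf a ps y - rf a ps x = (y - x) + (\<Sum>(l, t)\<leftarrow>ps. l / (x - t) - l / (y - t))"
  by (induction ps) (auto simp: rf_def algebra_simps)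

lemma pole_terms_pos:
  assumes "admissible ps" "x < y" "poles ps \<inter> {x..y} = {}" "z \<in> set ps"
  shows "0 < (case z of (l, t) \<Rightarrow> l / (x - t) - l / (y - t))"
  using assms pole_term_less unfolding admissible_def poles_def by fastforce

lemma rf_increment_ge:
  assumes "admissible ps" "x < y" "poles ps \<inter> {x..y} = {}"
  shows "y - x \<le> rf a ps y - rf a ps x"
proof -
  have "0 \<le> (\<Sum>(l, t)\<leftarrow>ps. l / (x - t) - l / (y - t))"
    using pole_terms_pos[OF assms] by (intro sum_list_nonneg) (fastforce simp: less_imp_le)
  then show ?thesis by (simp add: rf_increment)
qed

lemma rf_increment_ge_pole_term:
  assumes "admissible ps" "x < y" "poles ps \<inter> {x..y} = {}" "(l, p) \<in> set ps"
  shows "(y - x) + (l / (x - p) - l / (y - p)) \<le> rf a ps y - rf a ps x"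
proof -
  let ?d = "\<lambda>(l, t). l / (x - t) - l / (y - t)"
  have "?d (l, p) \<le> (\<Sum>z\<leftarrow>ps. ?d z)"
    using pole_terms_pos[OF assms(1-3)] assms(4) by (intro member_le_sum_list_nonneg less_imp_le)
  then show ?thesis by (simp add: rf_increment)
qed

lemma continuous_on_rf:
  assumes "poles ps \<inter> S = {}"
  shows "continuous_on S (rf a ps)"
proof -
  have "continuous_on S (\<lambda>x. \<Sum>(l, t)\<leftarrow>ps. l / (x - t))"
    using assms by (induction ps) (auto simp: poles_def intro!: continuous_intros)
  then show ?thesis unfolding rf_def[abs_def] by (intro continuous_intros)
qed

definition reflect_poles :: "(real \<times> real) list \<Rightarrow> (real \<times> real) list" where
  "reflect_poles ps = map (\<lambda>(l, t). (l, - t)) ps"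

lemma rf_reflect_poles: "rf (- a) (reflect_poles ps) x = - rf a ps (- x)"
proof -
  have "l / (x + t) = - (l / (- x - t))" for l t :: real
    using divide_minus_right[of l "x + t"] by simp
  then show ?thesis by (induction ps) (auto simp: rf_def reflect_poles_def algebra_simps)
qed

lemma poles_reflect_poles: "poles (reflect_poles ps) = uminus ` poles ps"
  unfolding poles_def reflect_poles_def by (force simp: image_iff)

lemma admissible_reflect_poles: "admissible ps \<Longrightarrow> admissible (reflect_poles ps)"
  unfolding admissible_def reflect_poles_def by auto

lemma finite_first_point_right:
  fixes Q :: "'a::linorder set"
  assumes "finite Q" "Q \<inter> {\<theta><..b} \<noteq> {}"
  obtains p where "p \<in> Q" "\<theta> < p" "p \<le> b" "Q \<inter> {\<theta><..<p} = {}"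
proof
  let ?p = "Min (Q \<inter> {\<theta><..b})"
  have "?p \<in> Q \<inter> {\<theta><..b}" using assms by (intro Min_in) auto
  then show "?p \<in> Q" "\<theta> < ?p" "?p \<le> b" by auto
  have "?p \<le> x" if "x \<in> Q \<inter> {\<theta><..b}" for x
    using assms(1) that by (intro Min_le) auto
  with \<open>?p \<le> b\<close> show "Q \<inter> {\<theta><..<?p} = {}" by fastforce
qed

lemma product_exceeds_near_pole:
  fixes f g :: "real \<Rightarrow> real"
  assumes "l > 0" "\<theta> < p"
    and "\<And>x. \<theta> < x \<Longrightarrow> x < p \<Longrightarrow> l / (\<theta> - p) - l / (x - p) \<le> f x \<and> x - \<theta> \<le> g x"
  shows "\<exists>c. \<theta> < c \<and> c < p \<and> lam < f c * g c"
proof -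
  let ?bound = "\<lambda>x. (l / (\<theta> - p) - l / (x - p)) * (x - \<theta>)"
  have "filterlim ?bound at_top (at_left p)"
    using assms(1,2) by real_asymp
  \<comment> \<open>\<open>max lam 0\<close> rather than \<open>lam\<close>, so that the first factor of \<open>?bound\<close> is positive\<close>
  then have "\<forall>\<^sub>F x in at_left p. max lam 0 < ?bound x"
    unfolding filterlim_at_top_dense by (rule spec)
  moreover have "\<forall>\<^sub>F x in at_left p. x \<in> {\<theta><..<p}"
    using assms(2) by (rule eventually_at_left_real)
  ultimately have "\<forall>\<^sub>F x in at_left p. max lam 0 < ?bound x \<and> \<theta> < x \<and> x < p"
    by eventually_elim auto
  then obtain c where c: "\<theta> < c" "c < p" and large: "max lam 0 < ?bound c"
    using eventually_happens'[OF trivial_limit_at_left_real] by blast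
  then have "0 < l / (\<theta> - p) - l / (c - p)"
    by (simp add: zero_less_mult_iff)
  then have "?bound c \<le> f c * g c"
    using assms(3)[OF c] c(1) by (intro mult_mono) auto
  then show ?thesis using c large by auto
qed

lemma rf_product_exceeds_pole_free:
  assumes ap: "admissible ps" and aq: "admissible qs" and "0 < s" and lt: "(l, t) \<in> set ps"
    and free: "(poles ps \<union> poles qs) \<inter> {\<theta>..\<theta> + s} = {}"
    and \<theta>: "0 \<le> rf a ps \<theta>" "0 \<le> rf b qs \<theta>"
  shows "s * s < rf a ps (\<theta> + s) * rf b qs (\<theta> + s)"
proof -
  have "\<theta> < \<theta> + s" using \<open>0 < s\<close> by simp
  have "l > 0" "t \<notin> {\<theta>..\<theta> + s}" using ap lt free by (auto simp: admissible_def poles_def)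
  then have "0 < l / (\<theta> - t) - l / (\<theta> + s - t)"
    using pole_term_less[OF _ \<open>\<theta> < \<theta> + s\<close>] by simp
  moreover have "s + (l / (\<theta> - t) - l / (\<theta> + s - t)) \<le> rf a ps (\<theta> + s) - rf a ps \<theta>"
    using rf_increment_ge_pole_term[OF ap \<open>\<theta> < \<theta> + s\<close> _ lt] free by auto
  moreover have "s \<le> rf b qs (\<theta> + s) - rf b qs \<theta>"
    using rf_increment_ge[OF aq \<open>\<theta> < \<theta> + s\<close>] free by auto
  ultimately show ?thesis
    using \<theta> \<open>0 < s\<close> by (intro mult_less_le_imp_less) auto
qed

lemma rf_product_exceeds_before_pole:
  assumes ap: "admissible ps" and aq: "admissible qs" and "\<theta> < p" and lp: "(l, p) \<in> set ps"
    and free: "\<And>x. x < p \<Longrightarrow> (poles ps \<union> poles qs) \<inter> {\<theta>..x} = {}"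
    and \<theta>: "0 \<le> rf a ps \<theta>" "0 \<le> rf b qs \<theta>"
  shows "\<exists>c. \<theta> < c \<and> c < p \<and> lam < rf a ps c * rf b qs c"
proof (rule product_exceeds_near_pole)
  show "l > 0" using ap lp by (auto simp: admissible_def)
  fix x assume x: "\<theta> < x" "x < p"
  have "x - \<theta> + (l / (\<theta> - p) - l / (x - p)) \<le> rf a ps x - rf a ps \<theta>"
    using rf_increment_ge_pole_term[OF ap x(1) _ lp] free[OF x(2)] by auto
  moreover have "x - \<theta> \<le> rf b qs x - rf b qs \<theta>"
    using rf_increment_ge[OF aq x(1)] free[OF x(2)] by auto
  ultimately show "l / (\<theta> - p) - l / (x - p) \<le> rf a ps x \<and> x - \<theta> \<le> rf b qs x"
    using \<theta> x(1) by auto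
qed (rule \<open>\<theta> < p\<close>)

lemma rf_product_exceeds_right:
  assumes ap: "admissible ps" and aq: "admissible qs"
    and has_pole: "poles ps \<union> poles qs \<noteq> {}" and "lam > 0"
    and \<theta>: "\<theta> \<notin> poles ps \<union> poles qs" "0 \<le> rf a ps \<theta>" "0 \<le> rf b qs \<theta>"
  shows "\<exists>c. \<theta> < c \<and> c \<le> \<theta> + sqrt lam \<and> (poles ps \<union> poles qs) \<inter> {\<theta>..c} = {} \<and>
           lam < rf a ps c * rf b qs c"
proof -
  define Q where "Q = poles ps \<union> poles qs"
  define s where "s = sqrt lam"
  have s: "0 < s" "s * s = lam" using \<open>lam > 0\<close> by (auto simp: s_def)
  have "finite Q" by (simp add: Q_def poles_def)
  consider (pole_free) "Q \<inter> {\<theta><..\<theta> + s} = {}"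
    | (first_pole) p where "p \<in> Q" "\<theta> < p" "p \<le> \<theta> + s" "Q \<inter> {\<theta><..<p} = {}"
    using finite_first_point_right[OF \<open>finite Q\<close>] by blast
  then show ?thesis
  proof cases
    case pole_free
    have "{\<theta>..\<theta> + s} = insert \<theta> {\<theta><..\<theta> + s}" using s(1) by auto
    then have free: "Q \<inter> {\<theta>..\<theta> + s} = {}" using pole_free \<theta>(1) by (auto simp: Q_def)
    obtain t where "t \<in> Q" using has_pole by (auto simp: Q_def)
    then obtain l where "(l, t) \<in> set ps \<or> (l, t) \<in> set qs"
      unfolding Q_def poles_def by force
    \<comment> \<open>the pole may belong to either factor, hence the second instance with roles swapped\<close>
    then have "s * s < rf a ps (\<theta> + s) * rf b qs (\<theta> + s)"
      using rf_product_exceeds_pole_free[OF ap aq s(1) _ _ \<theta>(2,3)]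
        rf_product_exceeds_pole_free[OF aq ap s(1) _ _ \<theta>(3,2)] free
      by (auto simp: Q_def Un_commute mult.commute)
    then show ?thesis using s free by (intro exI[of _ "\<theta> + s"]) (auto simp: Q_def s_def)
  next
    case first_pole
    have free: "Q \<inter> {\<theta>..x} = {}" if "x < p" for x
    proof -
      have "{\<theta>..x} \<subseteq> insert \<theta> {\<theta><..<p}" using that by auto
      then show ?thesis using first_pole(4) \<theta>(1) by (auto simp: Q_def)
    qed
    obtain l where "(l, p) \<in> set ps \<or> (l, p) \<in> set qs"
      using first_pole(1) unfolding Q_def poles_def by force
    then obtain c where "\<theta> < c" "c < p" "lam < rf a ps c * rf b qs c"
      using rf_product_exceeds_before_pole[OF ap aq first_pole(2) _ _ \<theta>(2,3)]
        rf_product_exceeds_before_pole[OF aq ap first_pole(2) _ _ \<theta>(3,2)] free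
      by (fastforce simp: Q_def Un_commute mult.commute)
    then show ?thesis using free first_pole(3) by (intro exI[of _ c]) (auto simp: Q_def s_def)
  qed
qed

lemma rf_product_eq_right:
  assumes "admissible ps" "admissible qs" "poles ps \<union> poles qs \<noteq> {}" "lam > 0"
    and \<theta>: "\<theta> \<notin> poles ps \<union> poles qs" "rf b qs \<theta> = 0" "0 \<le> rf a ps \<theta>"
  shows "\<exists>x \<in> {\<theta><..<\<theta> + sqrt lam}. x \<notin> poles ps \<union> poles qs \<and>
           0 < rf b qs x \<and> rf a ps x * rf b qs x = lam"
proof -
  have "0 \<le> rf b qs \<theta>" using \<theta>(2) by simp
  then obtain c where c: "\<theta> < c" "c \<le> \<theta> + sqrt lam"
      and free: "(poles ps \<union> poles qs) \<inter> {\<theta>..c} = {}" and exceeds: "lam < rf a ps c * rf b qs c"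
    using rf_product_exceeds_right[OF assms(1-5) \<theta>(3)] by blast
  have "continuous_on {\<theta>..c} (\<lambda>x. rf a ps x * rf b qs x)"
    using free by (intro continuous_intros continuous_on_rf) auto
  then obtain x where x: "\<theta> \<le> x" "x \<le> c" and root: "rf a ps x * rf b qs x = lam"
    using IVT'[of "\<lambda>x. rf a ps x * rf b qs x" \<theta> lam c] \<theta>(2) exceeds \<open>lam > 0\<close> c(1) by auto
  have "x \<noteq> \<theta>" "x \<noteq> c" using root \<theta>(2) exceeds \<open>lam > 0\<close> by auto
  with x have x': "\<theta> < x" "x < c" by auto
  then have "x - \<theta> \<le> rf b qs x - rf b qs \<theta>"
    using free by (intro rf_increment_ge[OF assms(2)]) auto
  then have "0 < rf b qs x" using x'(1) \<theta>(2) by simp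
  moreover have "x \<notin> poles ps \<union> poles qs" using free x x' by auto
  ultimately show ?thesis using root x' c by (intro bexI[of _ x]) auto
qed

lemma rf_product_eq_left:
  assumes ap: "admissible ps" and aq: "admissible qs"
    and "poles ps \<union> poles qs \<noteq> {}" "lam > 0"
    and \<theta>: "\<theta> \<notin> poles ps \<union> poles qs" "rf b qs \<theta> = 0" "rf a ps \<theta> \<le> 0"
  shows "\<exists>x \<in> {\<theta> - sqrt lam<..<\<theta>}. x \<notin> poles ps \<union> poles qs \<and>
           rf b qs x < 0 \<and> rf a ps x * rf b qs x = lam"
proof -
  let ?ps = "reflect_poles ps" and ?qs = "reflect_poles qs"
  have "- \<theta> \<notin> poles ?ps \<union> poles ?qs" "poles ?ps \<union> poles ?qs \<noteq> {}"
    using assms(3) \<theta>(1) by (auto simp: poles_reflect_poles)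
  moreover have "rf (- b) ?qs (- \<theta>) = 0" "0 \<le> rf (- a) ?ps (- \<theta>)"
    using \<theta>(2,3) by (simp_all add: rf_reflect_poles)
  ultimately obtain x where "x \<in> {- \<theta><..<- \<theta> + sqrt lam}" "x \<notin> poles ?ps \<union> poles ?qs"
      "0 < rf (- b) ?qs x" "rf (- a) ?ps x * rf (- b) ?qs x = lam"
    using rf_product_eq_right[OF admissible_reflect_poles[OF ap] admissible_reflect_poles[OF aq]]
      \<open>lam > 0\<close> by blast
  then show ?thesis
    by (intro bexI[of _ "- x"]) (auto simp: poles_reflect_poles rf_reflect_poles image_iff)
qed

theorem lemma12:
  fixes a0 b0 lam \<theta> :: real and ps qs :: "(real \<times> real) list"
  assumes "admissible ps" and "admissible qs"
    and "poles ps \<union> poles qs \<noteq> {}"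
    and "lam > 0"
    and "\<theta> \<notin> poles qs" and "rf b0 qs \<theta> = 0"
    and "\<theta> \<notin> poles ps"
  shows "\<exists>\<theta>'. \<theta>' \<in> {\<theta> - sqrt lam <..< \<theta> + sqrt lam} \<and>
           \<theta>' \<notin> poles qs \<and> rf b0 qs \<theta>' \<noteq> 0 \<and> \<theta>' \<notin> poles ps \<and>
           rf a0 ps \<theta>' - lam / rf b0 qs \<theta>' = 0"
proof -
  have "sqrt lam > 0" using \<open>lam > 0\<close> by simp
  obtain x where "x \<in> {\<theta> - sqrt lam <..< \<theta> + sqrt lam}" "x \<notin> poles ps \<union> poles qs"
    "rf b0 qs x \<noteq> 0" "rf a0 ps x * rf b0 qs x = lam"
  proof (cases "0 \<le> rf a0 ps \<theta>")
    case True
    then obtain x where "x \<in> {\<theta><..<\<theta> + sqrt lam}" "x \<notin> poles ps \<union> poles qs"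
        "0 < rf b0 qs x" "rf a0 ps x * rf b0 qs x = lam"
      using rf_product_eq_right[of ps qs lam \<theta> b0 a0] assms by blast
    with \<open>sqrt lam > 0\<close> show thesis by (intro that) simp_all
  next
    case False
    then obtain x where "x \<in> {\<theta> - sqrt lam<..<\<theta>}" "x \<notin> poles ps \<union> poles qs"
        "rf b0 qs x < 0" "rf a0 ps x * rf b0 qs x = lam"
      using rf_product_eq_left[of ps qs lam \<theta> b0 a0] assms by fastforce
    with \<open>sqrt lam > 0\<close> show thesis by (intro that) simp_all
  qed
  then show ?thesis by (intro exI[of _ x]) (auto simp: field_simps)
qed

end
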